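(* Let $m\ge 2$, $d_1,\dots,d_m\ge 2$, and let $\rho$ be a density matrix on $\mathbb{C}^{d_1}\otimes\cdots\otimes\mathbb{C}^{d_m}$. For each $i=1,\dots,m$ let $\mathcal{P}^{(i)}=\{P^{(i)}_j\}_{j=1}^{d_i^2}$ be a general SIC-POVM on $\mathbb{C}^{d_i}$ with parameter $a_i$. Let $d=\min\{d_1^2,\dots,d_m^2\}$ and define $$J(\rho)=\max_{\sigma_1,\dots,\sigma_m}\sum_{j=1}^{d}\mathrm{Tr}\Big[\Big(\bigotimes_{i=1}^m P^{(i)}_{\sigma_i(j)}\Big)\rho\Big],$$ where the maximum runs over all tuples of injective maps $\sigma_i:\{1,\dots,d\}\to\{1,\dots,d_i^2\}$, $i=1,\dots,m$. If $\rho$ is fully separable, then $$J(\rho)\le \frac1m\sum_{i=1}^m\frac{a_id_i^2+1}{d_i(d_i+1)}.$$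
   Context: A general SIC-POVM on $\mathbb{C}^{n}$ with parameter $a$ is a set of $n^2$ positive semidefinite operators $\{P_\alpha\}_{\alpha=1}^{n^2}$ on $\mathbb{C}^{n}$ such that $\sum_{\alpha=1}^{n^2}P_\alpha=I$, $\mathrm{Tr}(P_\alpha^2)=a$ for all $\alpha$, and $\mathrm{Tr}(P_\alpha P_\beta)=\frac{1-na}{n(n^2-1)}$ for all $\alpha\neq\beta$; here $\frac{1}{n^3}<a\le\frac{1}{n^2}$. A density matrix on $\mathbb{C}^{d_1}\otimes\cdots\otimes\mathbb{C}^{d_m}$ is fully separable if it is a convex combination of product states $\rho_1\otimes\cdots\otimes\rho_m$. *)

theory Defs
  imports Complex_Main "Jordan_Normal_Form.Matrix"
begin

(* Matrices are Jordan_Normal_Form matrices over complex numbers; all indices are 0-based. *)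

definition mtrace :: "complex mat \<Rightarrow> complex" where
  "mtrace A = (\<Sum>i<dim_row A. A $$ (i, i))"

definition hermitian_mat :: "nat \<Rightarrow> complex mat \<Rightarrow> bool" where
  "hermitian_mat n A \<longleftrightarrow> A \<in> carrier_mat n n \<and>
     (\<forall>i<n. \<forall>j<n. A $$ (i, j) = cnj (A $$ (j, i)))"

definition psd_mat :: "nat \<Rightarrow> complex mat \<Rightarrow> bool" where
  "psd_mat n A \<longleftrightarrow> hermitian_mat n A \<and>
     (\<forall>v :: nat \<Rightarrow> complex. 0 \<le> Re (\<Sum>i<n. \<Sum>j<n. cnj (v i) * A $$ (i, j) * v j))"

definition density_matrix :: "nat \<Rightarrow> complex mat \<Rightarrow> bool" where
  "density_matrix n \<rho> \<longleftrightarrow> psd_mat n \<rho> \<and> mtrace \<rho> = 1"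

definition kron :: "complex mat \<Rightarrow> complex mat \<Rightarrow> complex mat" where
  "kron A B = mat (dim_row A * dim_row B) (dim_col A * dim_col B)
     (\<lambda>(i, j). A $$ (i div dim_row B, j div dim_col B) * B $$ (i mod dim_row B, j mod dim_col B))"

fun tensor_prod :: "nat \<Rightarrow> (nat \<Rightarrow> complex mat) \<Rightarrow> complex mat" where
  "tensor_prod 0 A = 1\<^sub>m 1"
| "tensor_prod (Suc k) A = kron (tensor_prod k A) (A k)"

definition general_sic_povm :: "nat \<Rightarrow> real \<Rightarrow> (nat \<Rightarrow> complex mat) \<Rightarrow> bool" where
  "general_sic_povm n a P \<longleftrightarrow>
     1 / real n ^ 3 < a \<and> a \<le> 1 / real n ^ 2 \<and>
     (\<forall>\<alpha><n^2. psd_mat n (P \<alpha>)) \<and>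
     (\<forall>i<n. \<forall>j<n. (\<Sum>\<alpha><n^2. P \<alpha> $$ (i, j)) = (1\<^sub>m n :: complex mat) $$ (i, j)) \<and>
     (\<forall>\<alpha><n^2. mtrace (P \<alpha> * P \<alpha>) = complex_of_real a) \<and>
     (\<forall>\<alpha><n^2. \<forall>\<beta><n^2. \<alpha> \<noteq> \<beta> \<longrightarrow>
        mtrace (P \<alpha> * P \<beta>) = complex_of_real ((1 - real n * a) / (real n * (real n ^ 2 - 1))))"

definition fully_separable :: "nat \<Rightarrow> (nat \<Rightarrow> nat) \<Rightarrow> complex mat \<Rightarrow> bool" where
  "fully_separable m d \<rho> \<longleftrightarrow>
     (let D = (\<Prod>i<m. d i) in
      \<exists>(K::nat) (p :: nat \<Rightarrow> real) (\<sigma> :: nat \<Rightarrow> nat \<Rightarrow> complex mat).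
        (\<forall>k<K. 0 \<le> p k) \<and> (\<Sum>k<K. p k) = 1 \<and>
        (\<forall>k<K. \<forall>i<m. density_matrix (d i) (\<sigma> k i)) \<and>
        \<rho> = mat D D (\<lambda>(r, c). \<Sum>k<K. complex_of_real (p k) * tensor_prod m (\<sigma> k) $$ (r, c)))"

(* J(rho): maximum over tuples of injective maps sigma_i : {0..<dd} \<rightarrow> {0..<d_i^2},
   dd = min_i d_i^2, of  sum_j Tr[(\<otimes>_i P_i(sigma_i j)) rho]  (a real number, taken as Re) *)
definition J_value :: "nat \<Rightarrow> (nat \<Rightarrow> nat) \<Rightarrow> (nat \<Rightarrow> nat \<Rightarrow> complex mat) \<Rightarrow> complex mat \<Rightarrow> real" where
  "J_value m d P \<rho> =
     (let dd = Min ((\<lambda>i. d i ^ 2) ` {..<m}) in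
      Max {Re (\<Sum>j<dd. mtrace (tensor_prod m (\<lambda>i. P i (\<sigma> i j)) * \<rho>)) | \<sigma> :: nat \<Rightarrow> nat \<Rightarrow> nat.
             \<forall>i<m. inj_on (\<sigma> i) {..<dd} \<and> \<sigma> i ` {..<dd} \<subseteq> {..<d i ^ 2}})"

end

theory Submission
  imports Defs
begin

(* For a product state \<sigma>_1 \<otimes> ... \<otimes> \<sigma>_m the j-th summand of J factorises as
   \<Prod>_i x_i(\<sigma>_i j), where x_i(\<alpha>) = Tr(P^(i)_\<alpha> \<sigma>_i) are the outcome probabilities of the
   local measurements.  A product of m \<ge> 2 numbers in [-1, 1] is at most the mean of their squares
   (bound it by consecutive pairs, cyclically, and use AM-GM), so the sum over j is at most
   (1/m) \<Sum>_i \<Sum>_\<alpha> x_i(\<alpha>)^2.  The Gram matrix of a general SIC-POVM gives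
   \<Sum>_\<alpha> x(\<alpha>)^2 \<le> 1/d^2 + (a - b) (Tr \<sigma>^2 - 1/d), a Bessel inequality for the traceless part of
   \<sigma>, where b is the overlap Tr(P_\<alpha> P_\<beta>), \<alpha> \<noteq> \<beta>; with Tr \<sigma>^2 \<le> 1 this is
   (a d^2 + 1) / (d (d + 1)).  The bound is linear in the state, so it extends to convex
   combinations of product states. *)

section \<open>Traces and the Hilbert-Schmidt inner product\<close>

lemma mtrace_mult:
  assumes "A \<in> carrier_mat n n" "B \<in> carrier_mat n n"
  shows "mtrace (A * B) = (\<Sum>i<n. \<Sum>j<n. A $$ (i, j) * B $$ (j, i))"
  using assms unfolding mtrace_def
  by (auto simp: scalar_prod_def atLeast0LessThan intro!: sum.cong)

lemma hermitian_mat_carrier: "hermitian_mat n A \<Longrightarrow> A \<in> carrier_mat n n"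
  unfolding hermitian_mat_def by blast

definition entries :: "complex mat \<Rightarrow> nat \<Rightarrow> nat \<Rightarrow> complex" where
  "entries A i j = A $$ (i, j)"

lemma entries_apply [simp]: "entries A i j = A $$ (i, j)"
  by (simp add: entries_def)

(* The real Hilbert-Schmidt inner product Re Tr(B^H A) of n x n matrices, taken on entry functions
   so that linear combinations can be formed entrywise; on hermitian matrices it is Tr(A B). *)
definition hs_inner :: "nat \<Rightarrow> (nat \<Rightarrow> nat \<Rightarrow> complex) \<Rightarrow> (nat \<Rightarrow> nat \<Rightarrow> complex) \<Rightarrow> real" where
  "hs_inner n A B = (\<Sum>i<n. \<Sum>j<n. Re (A i j * cnj (B i j)))"

lemma hs_inner_commute: "hs_inner n A B = hs_inner n B A"
  unfolding hs_inner_def by (simp add: mult.commute)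

lemma hs_inner_self_nonneg: "0 \<le> hs_inner n A A"
  unfolding hs_inner_def by (intro sum_nonneg) (simp add: complex_mult_cnj)

lemma hs_inner_cong_left:
  assumes "\<And>i j. i < n \<Longrightarrow> j < n \<Longrightarrow> A i j = A' i j"
  shows "hs_inner n A B = hs_inner n A' B"
  unfolding hs_inner_def using assms by (intro sum.cong refl) auto

lemma hs_inner_sum_left:
  assumes "finite S"
  shows "hs_inner n (\<lambda>i j. \<Sum>\<alpha>\<in>S. complex_of_real (u \<alpha>) * M \<alpha> i j) B
       = (\<Sum>\<alpha>\<in>S. u \<alpha> * hs_inner n (M \<alpha>) B)"
proof -
  have "hs_inner n (\<lambda>i j. \<Sum>\<alpha>\<in>S. complex_of_real (u \<alpha>) * M \<alpha> i j) B
      = (\<Sum>i<n. \<Sum>j<n. \<Sum>\<alpha>\<in>S. u \<alpha> * Re (M \<alpha> i j * cnj (B i j)))"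
    unfolding hs_inner_def by (simp add: sum_distrib_right Re_sum mult.assoc)
  also have "\<dots> = (\<Sum>\<alpha>\<in>S. \<Sum>i<n. \<Sum>j<n. u \<alpha> * Re (M \<alpha> i j * cnj (B i j)))"
    by (simp add: sum.swap[of _ S])
  also have "\<dots> = (\<Sum>\<alpha>\<in>S. u \<alpha> * hs_inner n (M \<alpha>) B)"
    unfolding hs_inner_def by (simp add: sum_distrib_left)
  finally show ?thesis .
qed

lemma hs_inner_sum_right:
  assumes "finite S"
  shows "hs_inner n B (\<lambda>i j. \<Sum>\<alpha>\<in>S. complex_of_real (u \<alpha>) * M \<alpha> i j)
       = (\<Sum>\<alpha>\<in>S. u \<alpha> * hs_inner n B (M \<alpha>))"
  using hs_inner_sum_left[OF assms] by (simp add: hs_inner_commute)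

lemma hs_inner_add_scaled_left:
  "hs_inner n (\<lambda>i j. A i j + complex_of_real u * B i j) C = hs_inner n A C + u * hs_inner n B C"
proof -
  have "Re ((A i j + complex_of_real u * B i j) * cnj (C i j))
      = Re (A i j * cnj (C i j)) + u * Re (B i j * cnj (C i j))" for i j
    by (simp add: distrib_right mult.assoc)
  then show ?thesis
    unfolding hs_inner_def by (simp only: sum.distrib sum_distrib_left)
qed

lemma hs_inner_add_scaled_right:
  "hs_inner n C (\<lambda>i j. A i j + complex_of_real u * B i j) = hs_inner n C A + u * hs_inner n C B"
  by (metis hs_inner_add_scaled_left hs_inner_commute)

(* Expand 0 \<le> \<parallel>Z - c T\<parallel>^2; for Z / c the orthogonal projection of T onto a subspace this is
   Bessel's inequality. *)
lemma hs_inner_projection_le: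
  assumes "hs_inner n Z Z = c * S" "hs_inner n Z T = S" "0 < c"
  shows "S \<le> c * hs_inner n T T"
proof -
  have "0 \<le> hs_inner n (\<lambda>i j. Z i j + complex_of_real (- c) * T i j)
              (\<lambda>i j. Z i j + complex_of_real (- c) * T i j)"
    by (rule hs_inner_self_nonneg)
  also have "\<dots> = c * (c * hs_inner n T T) - c * S"
    unfolding hs_inner_add_scaled_left hs_inner_add_scaled_right assms(1,2) hs_inner_commute[of n T Z]
    by (simp add: algebra_simps)
  finally have "c * S \<le> c * (c * hs_inner n T T)"
    by simp
  then show ?thesis
    using assms(3) by (rule mult_left_le_imp_le)
qed

lemma hs_inner_one_mat_right:
  assumes "A \<in> carrier_mat n n"
  shows "hs_inner n (entries A) (entries (1\<^sub>m n)) = Re (mtrace A)"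
proof -
  have "hs_inner n (entries A) (entries (1\<^sub>m n)) = (\<Sum>i<n. \<Sum>j<n. if i = j then Re (A $$ (i, i)) else 0)"
    unfolding hs_inner_def by (intro sum.cong refl) auto
  also have "\<dots> = Re (mtrace A)"
    using assms by (simp add: mtrace_def Re_sum)
  finally show ?thesis .
qed

lemma mtrace_hermitian_mult:
  assumes "hermitian_mat n A" "hermitian_mat n B"
  shows "mtrace (A * B) = complex_of_real (hs_inner n (entries A) (entries B))"
proof -
  define s where "s = (\<Sum>i<n. \<Sum>j<n. A $$ (i, j) * cnj (B $$ (i, j)))"
  have A: "A \<in> carrier_mat n n" "\<forall>i<n. \<forall>j<n. A $$ (i, j) = cnj (A $$ (j, i))"
    and B: "B \<in> carrier_mat n n" "\<forall>i<n. \<forall>j<n. B $$ (i, j) = cnj (B $$ (j, i))"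
    using assms unfolding hermitian_mat_def by blast+
  have "mtrace (A * B) = s"
    unfolding mtrace_mult[OF A(1) B(1)] s_def
  proof (intro sum.cong refl)
    fix i j assume "i \<in> {..<n}" "j \<in> {..<n}"
    then have "B $$ (j, i) = cnj (B $$ (i, j))" using B(2) by blast
    then show "A $$ (i, j) * B $$ (j, i) = A $$ (i, j) * cnj (B $$ (i, j))" by simp
  qed
  moreover have "s \<in> \<real>"
  proof -
    have "cnj s = (\<Sum>i<n. \<Sum>j<n. A $$ (j, i) * cnj (B $$ (j, i)))"
      unfolding s_def cnj_sum
    proof (intro sum.cong refl)
      fix i j assume "i \<in> {..<n}" "j \<in> {..<n}"
      then have "A $$ (j, i) = cnj (A $$ (i, j))" "B $$ (j, i) = cnj (B $$ (i, j))"
        using A(2) B(2) by blast+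
      then show "cnj (A $$ (i, j) * cnj (B $$ (i, j))) = A $$ (j, i) * cnj (B $$ (j, i))" by simp
    qed
    also have "\<dots> = s"
      unfolding s_def by (rule sum.swap)
    finally show ?thesis
      by (simp add: Reals_cnj_iff)
  qed
  ultimately have "mtrace (A * B) = complex_of_real (Re s)"
    by simp
  also have "Re s = hs_inner n (entries A) (entries B)"
    unfolding s_def hs_inner_def by (simp only: Re_sum entries_apply)
  finally show ?thesis .
qed

section \<open>Positive semidefinite matrices\<close>

lemma psd_mat_quadratic_form_two:
  assumes "psd_mat n A" "i < n" "j < n" "i \<noteq> j"
  shows "0 \<le> Re (cnj s * A $$ (i, i) * s + cnj s * A $$ (i, j) * t
                 + cnj t * A $$ (j, i) * s + cnj t * A $$ (j, j) * t)"
proof -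
  define v where "v = (\<lambda>k. if k = i then s else if k = j then t else 0)"
  have sub: "{i, j} \<subseteq> {..<n}" using assms by auto
  have row: "(\<Sum>l<n. cnj (v k) * A $$ (k, l) * v l) = (\<Sum>l\<in>{i,j}. cnj (v k) * A $$ (k, l) * v l)" for k
    by (rule sum.mono_neutral_right) (use sub in \<open>auto simp: v_def\<close>)
  have "(\<Sum>k<n. \<Sum>l<n. cnj (v k) * A $$ (k, l) * v l) = (\<Sum>k\<in>{i,j}. \<Sum>l\<in>{i,j}. cnj (v k) * A $$ (k, l) * v l)"
    unfolding row by (rule sum.mono_neutral_right) (use sub in \<open>auto simp: v_def\<close>)
  also have "\<dots> = cnj s * A $$ (i, i) * s + cnj s * A $$ (i, j) * t
                   + cnj t * A $$ (j, i) * s + cnj t * A $$ (j, j) * t"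
    using assms(4) by (simp add: v_def)
  moreover have "0 \<le> Re (\<Sum>k<n. \<Sum>l<n. cnj (v k) * A $$ (k, l) * v l)"
    using assms(1) unfolding psd_mat_def by blast
  ultimately show ?thesis
    by simp
qed

lemma psd_mat_diag_nonneg:
  assumes "psd_mat n A" "k < n"
  shows "0 \<le> Re (A $$ (k, k))"
proof -
  define v :: "nat \<Rightarrow> complex" where "v l = of_bool (l = k)" for l
  have [simp]: "cnj (of_bool b) = of_bool b" for b
    by (cases b) simp_all
  have "(\<Sum>b<n. cnj (v a) * A $$ (a, b) * v b) = cnj (v a) * A $$ (a, k)" for a
    using assms(2) by (simp add: v_def)
  then have "(\<Sum>a<n. \<Sum>b<n. cnj (v a) * A $$ (a, b) * v b) = (\<Sum>a<n. cnj (v a) * A $$ (a, k))"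
    by simp
  also have "\<dots> = A $$ (k, k)"
    using assms(2) by (simp add: v_def)
  moreover have "0 \<le> Re (\<Sum>a<n. \<Sum>b<n. cnj (v a) * A $$ (a, b) * v b)"
    using assms(1) unfolding psd_mat_def by blast
  ultimately show ?thesis
    by simp
qed

lemma hermitian_mat_diag_real:
  assumes "hermitian_mat n A" "k < n"
  shows "Im (A $$ (k, k)) = 0"
proof -
  have "A $$ (k, k) = cnj (A $$ (k, k))"
    using assms unfolding hermitian_mat_def by blast
  then show ?thesis
    by (metis Reals_cnj_iff complex_is_Real_iff)
qed

lemma nonneg_quadratic_discriminant:
  fixes p q e :: real
  assumes "p \<ge> 0" "q \<ge> 0" "e \<ge> 0" "\<And>r. 0 \<le> p * r^2 - 2 * q * r + q * e"
  shows "q \<le> p * e"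
proof (cases "p > 0")
  case True
  have "0 \<le> p * (q/p)^2 - 2 * q * (q/p) + q * e" by (rule assms(4))
  also have "\<dots> = q * (e - q / p)" using True by (simp add: power2_eq_square field_simps)
  finally have "q = 0 \<or> q / p \<le> e" using assms(2) by (auto simp: zero_le_mult_iff)
  then show ?thesis using True assms by (auto simp: divide_le_eq mult.commute)
next
  case False
  then have "p = 0" using assms(1) by simp
  have "0 \<le> p * (e+1)^2 - 2 * q * (e+1) + q * e" by (rule assms(4))
  then have "q * (e + 2) \<le> 0" using \<open>p = 0\<close> by (simp add: algebra_simps)
  then have "q = 0" using assms(2,3) by (simp add: mult_le_0_iff)
  then show ?thesis using \<open>p = 0\<close> by simp
qed

lemma psd_mat_entry_bound:
  assumes "psd_mat n A" "i < n" "j < n"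
  shows "(cmod (A $$ (i, j)))^2 \<le> Re (A $$ (i, i)) * Re (A $$ (j, j))"
proof (cases "i = j")
  case True
  have "hermitian_mat n A" using assms(1) unfolding psd_mat_def by blast
  from hermitian_mat_diag_real[OF this assms(2)] show ?thesis
    using True by (simp add: cmod_def power2_eq_square)
next
  case False
  define c where "c = A $$ (i, j)"
  have herm: "hermitian_mat n A" using assms(1) unfolding psd_mat_def by blast
  then have Aji: "A $$ (j, i) = cnj c"
    using assms(2,3) unfolding c_def hermitian_mat_def by (metis complex_cnj_cnj)
  (* the quadratic form at the vector r e_i - (cnj c) e_j *)
  have "0 \<le> Re (A $$ (i, i)) * r^2 - 2 * (cmod c)^2 * r + (cmod c)^2 * Re (A $$ (j, j))" for r
  proof -
    have "0 \<le> Re (cnj (complex_of_real r) * A $$ (i, i) * complex_of_real r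
            + cnj (complex_of_real r) * A $$ (i, j) * (- cnj c)
            + cnj (- cnj c) * A $$ (j, i) * complex_of_real r + cnj (- cnj c) * A $$ (j, j) * (- cnj c))"
      by (rule psd_mat_quadratic_form_two[OF assms False])
    also have "\<dots> = Re (A $$ (i, i)) * r^2 - 2 * (cmod c)^2 * r + (cmod c)^2 * Re (A $$ (j, j))"
      using hermitian_mat_diag_real[OF herm assms(2)] hermitian_mat_diag_real[OF herm assms(3)]
      unfolding Aji c_def[symmetric] cmod_power2
      by (simp add: algebra_simps power2_eq_square)
    finally show ?thesis .
  qed
  then show ?thesis unfolding c_def
    using psd_mat_diag_nonneg[OF assms(1,2)] psd_mat_diag_nonneg[OF assms(1,3)]
    by (intro nonneg_quadratic_discriminant) auto
qed

lemma density_matrix_purity_le_one: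
  assumes "density_matrix n A"
  shows "hs_inner n (entries A) (entries A) \<le> 1"
proof -
  have psd: "psd_mat n A" and tr: "mtrace A = 1"
    using assms unfolding density_matrix_def by auto
  have "A \<in> carrier_mat n n"
    using psd unfolding psd_mat_def by (blast intro: hermitian_mat_carrier)
  then have dim: "dim_row A = n"
    by simp
  have "hs_inner n (entries A) (entries A) = (\<Sum>i<n. \<Sum>j<n. (cmod (A $$ (i, j)))^2)"
    unfolding hs_inner_def by (intro sum.cong refl) (simp add: complex_mult_cnj cmod_power2)
  also have "\<dots> \<le> (\<Sum>i<n. \<Sum>j<n. Re (A $$ (i, i)) * Re (A $$ (j, j)))"
    by (intro sum_mono psd_mat_entry_bound[OF psd]) auto
  also have "\<dots> = (\<Sum>i<n. Re (A $$ (i, i)))^2"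
    by (simp add: sum_product power2_eq_square)
  also have "\<dots> = 1"
    using tr dim unfolding mtrace_def by (metis Re_sum one_complex.simps(1) power_one)
  finally show ?thesis .
qed

section \<open>General SIC-POVMs\<close>

definition sic_overlap :: "nat \<Rightarrow> real \<Rightarrow> real" where
  "sic_overlap n a = (1 - real n * a) / (real n * (real n ^ 2 - 1))"

lemma sic_overlap_gap:
  assumes "n \<ge> 2"
  shows "a - sic_overlap n a = (a * real n ^ 3 - 1) / (real n * (real n ^ 2 - 1))"
proof -
  define D where "D = real n * (real n ^ 2 - 1)"
  have "real n ^ 2 \<ge> 2 ^ 2" using assms by (intro power_mono) auto
  then have "D \<noteq> 0" using assms unfolding D_def by auto
  then have "a - sic_overlap n a = (a * D - (1 - real n * a)) / D"
    unfolding sic_overlap_def D_def[symmetric] by (simp add: field_simps)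
  also have "a * D - (1 - real n * a) = a * real n ^ 3 - 1"
    unfolding D_def by (simp add: algebra_simps power3_eq_cube power2_eq_square)
  finally show ?thesis unfolding D_def .
qed

lemma sic_gap_bound_eq:
  fixes a x :: real
  assumes "x > 1"
  shows "(a * x ^ 3 - 1) / (x * (x ^ 2 - 1)) * (1 - 1 / x) + 1 / x ^ 2
       = (a * x ^ 2 + 1) / (x * (x + 1))"
proof -
  have e: "x * (x ^ 2 - 1) = x * (x + 1) * (x - 1)" by (simp add: algebra_simps power2_eq_square)
  have nz: "x - 1 \<noteq> 0" "x * (x + 1) \<noteq> 0" "x \<noteq> 0" using assms by auto
  have s1: "1 - 1 / x = (x - 1) / x" using nz by (simp add: field_simps)
  have "(a * x ^ 3 - 1) / (x * (x ^ 2 - 1)) * (1 - 1 / x) + 1 / x ^ 2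
      = (a * x ^ 3 - 1) / (x * (x + 1) * x) + (x + 1) / (x * (x + 1) * x)"
    unfolding e s1 using nz by (simp add: power2_eq_square)
  also have "\<dots> = ((a * x ^ 3 - 1) + (x + 1)) / (x * (x + 1) * x)"
    by (rule add_divide_distrib[symmetric])
  also have "(a * x ^ 3 - 1) + (x + 1) = (a * x ^ 2 + 1) * x"
    by (simp add: algebra_simps power3_eq_cube power2_eq_square)
  also have "(a * x ^ 2 + 1) * x / (x * (x + 1) * x) = (a * x ^ 2 + 1) / (x * (x + 1))"
    using nz by simp
  finally show ?thesis .
qed

lemma sum_mult_if_eq:
  fixes f :: "nat \<Rightarrow> real"
  assumes "\<beta> < N"
  shows "(\<Sum>\<alpha><N. f \<alpha> * (if \<alpha> = \<beta> then a else b)) = b * (\<Sum>\<alpha><N. f \<alpha>) + (a - b) * f \<beta>"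
proof -
  have "(\<Sum>\<alpha><N. f \<alpha> * (if \<alpha> = \<beta> then a else b))
      = (\<Sum>\<alpha><N. b * f \<alpha> + (if \<alpha> = \<beta> then (a - b) * f \<alpha> else 0))"
    by (intro sum.cong refl) (auto simp: algebra_simps)
  also have "\<dots> = b * (\<Sum>\<alpha><N. f \<alpha>) + (a - b) * f \<beta>"
    using assms by (simp add: sum.distrib sum_distrib_left)
  finally show ?thesis .
qed

lemma sum_square_shift:
  fixes w :: "nat \<Rightarrow> real"
  assumes "(\<Sum>\<alpha><N. w \<alpha>) = 0"
  shows "(\<Sum>\<alpha><N. (w \<alpha> + t)^2) = (\<Sum>\<alpha><N. (w \<alpha>)^2) + real N * t^2"
proof -
  have "(\<Sum>\<alpha><N. (w \<alpha> + t)^2) = (\<Sum>\<alpha><N. (w \<alpha>)^2 + w \<alpha> * (2 * t) + t^2)"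
    by (intro sum.cong refl) (simp add: power2_eq_square algebra_simps)
  then show ?thesis
    unfolding sum.distrib sum_distrib_right[symmetric] assms by simp
qed

lemma general_sic_povm_hermitian:
  "general_sic_povm n a P \<Longrightarrow> \<alpha> < n ^ 2 \<Longrightarrow> hermitian_mat n (P \<alpha>)"
  unfolding general_sic_povm_def psd_mat_def by blast

lemma general_sic_povm_gap_pos:
  assumes "general_sic_povm n a P" "n \<ge> 2"
  shows "0 < a - sic_overlap n a"
proof -
  have nr: "real n \<ge> 2" using assms(2) by simp
  have "4 \<le> real n ^ 2" using power_mono[of "2::real" "real n" 2] nr by simp
  moreover have "a * real n ^ 3 > 1"
    using assms(1) nr unfolding general_sic_povm_def by (simp add: field_simps)
  ultimately show ?thesis
    unfolding sic_overlap_gap[OF assms(2)] using nr by simp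
qed

lemma general_sic_povm_hs_inner:
  assumes sic: "general_sic_povm n a P" and "\<alpha> < n ^ 2" "\<beta> < n ^ 2"
  shows "hs_inner n (entries (P \<alpha>)) (entries (P \<beta>)) = (if \<alpha> = \<beta> then a else sic_overlap n a)"
proof -
  have "complex_of_real (hs_inner n (entries (P \<alpha>)) (entries (P \<beta>))) = mtrace (P \<alpha> * P \<beta>)"
    using mtrace_hermitian_mult[OF general_sic_povm_hermitian[OF sic assms(2)]
        general_sic_povm_hermitian[OF sic assms(3)]] by simp
  also have "\<dots> = complex_of_real (if \<alpha> = \<beta> then a else sic_overlap n a)"
    using assms unfolding general_sic_povm_def sic_overlap_def by auto
  finally show ?thesis by (simp only: of_real_eq_iff)
qed

lemma general_sic_povm_hs_inner_one_left:
  assumes "general_sic_povm n a P"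
  shows "hs_inner n (entries (1\<^sub>m n)) B = (\<Sum>\<alpha><n^2. hs_inner n (entries (P \<alpha>)) B)"
proof -
  have "hs_inner n (entries (1\<^sub>m n)) B
      = hs_inner n (\<lambda>i j. \<Sum>\<alpha><n^2. complex_of_real 1 * entries (P \<alpha>) i j) B"
    using assms unfolding general_sic_povm_def by (intro hs_inner_cong_left) simp
  also have "\<dots> = (\<Sum>\<alpha><n^2. 1 * hs_inner n (entries (P \<alpha>)) B)"
    by (rule hs_inner_sum_left) simp
  finally show ?thesis by simp
qed

lemma general_sic_povm_trace:
  assumes sic: "general_sic_povm n a P" and n: "n \<ge> 2" and "\<beta> < n ^ 2"
  shows "hs_inner n (entries (P \<beta>)) (entries (1\<^sub>m n)) = 1 / real n"
proof -
  have "hs_inner n (entries (P \<beta>)) (entries (1\<^sub>m n))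
      = (\<Sum>\<alpha><n^2. 1 * (if \<alpha> = \<beta> then a else sic_overlap n a))"
    unfolding hs_inner_commute[of n "entries (P \<beta>)"] general_sic_povm_hs_inner_one_left[OF sic]
    using general_sic_povm_hs_inner[OF sic _ assms(3)] by simp
  also have "\<dots> = a + (real n ^ 2 - 1) * sic_overlap n a"
    using sum_mult_if_eq[OF assms(3), of "\<lambda>_. 1"] by (simp add: algebra_simps)
  also have "\<dots> = 1 / real n"
  proof -
    have "4 \<le> real n ^ 2" using power_mono[of "2::real" "real n" 2] n by simp
    then have "real n ^ 2 - 1 \<noteq> 0" by linarith
    then show ?thesis unfolding sic_overlap_def using n by (simp add: field_simps)
  qed
  finally show ?thesis .
qed

definition mat_lincomb :: "nat \<Rightarrow> (nat \<Rightarrow> complex mat) \<Rightarrow> (nat \<Rightarrow> real) \<Rightarrow> nat \<Rightarrow> nat \<Rightarrow> complex" where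
  "mat_lincomb N P w = (\<lambda>i j. \<Sum>\<alpha><N. complex_of_real (w \<alpha>) * entries (P \<alpha>) i j)"

lemma general_sic_povm_hs_inner_lincomb:
  assumes sic: "general_sic_povm n a P" and "\<beta> < n ^ 2" and "(\<Sum>\<alpha><n^2. w \<alpha>) = 0"
  shows "hs_inner n (mat_lincomb (n^2) P w) (entries (P \<beta>)) = (a - sic_overlap n a) * w \<beta>"
proof -
  have "hs_inner n (mat_lincomb (n^2) P w) (entries (P \<beta>))
      = (\<Sum>\<alpha><n^2. w \<alpha> * hs_inner n (entries (P \<alpha>)) (entries (P \<beta>)))"
    unfolding mat_lincomb_def by (rule hs_inner_sum_left) simp
  also have "\<dots> = (\<Sum>\<alpha><n^2. w \<alpha> * (if \<alpha> = \<beta> then a else sic_overlap n a))"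
    using general_sic_povm_hs_inner[OF sic _ assms(2)] by simp
  also have "\<dots> = (a - sic_overlap n a) * w \<beta>"
    using sum_mult_if_eq[OF assms(2), of w] assms(3) by simp
  finally show ?thesis .
qed

lemma general_sic_povm_lincomb_hs_inner_self:
  assumes sic: "general_sic_povm n a P" and "(\<Sum>\<alpha><n^2. w \<alpha>) = 0"
  shows "hs_inner n (mat_lincomb (n^2) P w) (mat_lincomb (n^2) P w)
       = (a - sic_overlap n a) * (\<Sum>\<alpha><n^2. (w \<alpha>)^2)"
proof -
  have "hs_inner n (mat_lincomb (n^2) P w) (mat_lincomb (n^2) P w)
      = (\<Sum>\<beta><n^2. w \<beta> * hs_inner n (mat_lincomb (n^2) P w) (entries (P \<beta>)))"
    unfolding mat_lincomb_def[of _ _ w] by (rule hs_inner_sum_right) simp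
  also have "\<dots> = (a - sic_overlap n a) * (\<Sum>\<alpha><n^2. (w \<alpha>)^2)"
    using general_sic_povm_hs_inner_lincomb[OF sic _ assms(2)]
    by (simp add: sum_distrib_left power2_eq_square mult.left_commute)
  finally show ?thesis .
qed

lemma general_sic_povm_lincomb_trace:
  assumes sic: "general_sic_povm n a P" and n: "n \<ge> 2" and "(\<Sum>\<alpha><n^2. w \<alpha>) = 0"
  shows "hs_inner n (mat_lincomb (n^2) P w) (entries (1\<^sub>m n)) = 0"
proof -
  have "hs_inner n (mat_lincomb (n^2) P w) (entries (1\<^sub>m n)) = (\<Sum>\<alpha><n^2. w \<alpha> * (1 / real n))"
    unfolding mat_lincomb_def
    by (subst hs_inner_sum_left) (simp_all add: general_sic_povm_trace[OF sic n])
  also have "\<dots> = 0"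
    unfolding sum_distrib_right[symmetric] assms(3) by simp
  finally show ?thesis .
qed

(* The probabilities x \<alpha> = Tr(P \<alpha> \<sigma>) are centred at 1/n^2; their centred part w is encoded in
   Z = \<Sum> w \<alpha> P \<alpha>, and Z / (a - b) is the projection of the traceless part T = \<sigma> - I/n of \<sigma>
   onto the span of the P \<alpha>. *)
lemma general_sic_povm_sum_square_le_purity:
  assumes sic: "general_sic_povm n a P" and n: "n \<ge> 2"
    and \<sigma>: "hermitian_mat n \<sigma>" "mtrace \<sigma> = 1"
  shows "(\<Sum>\<alpha><n^2. (hs_inner n (entries (P \<alpha>)) (entries \<sigma>))^2)
       \<le> 1 / real n ^ 2 + (a - sic_overlap n a) * (hs_inner n (entries \<sigma>) (entries \<sigma>) - 1 / real n)"
proof -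
  define I where "I = entries (1\<^sub>m n)"
  define w where "w \<alpha> = hs_inner n (entries (P \<alpha>)) (entries \<sigma>) - 1 / real n ^ 2" for \<alpha>
  define S where "S = (\<Sum>\<alpha><n^2. (w \<alpha>)^2)"
  define Z where "Z = mat_lincomb (n^2) P w"
  define T where "T = (\<lambda>i j. entries \<sigma> i j + complex_of_real (- 1 / real n) * I i j)"
  have nr: "real n \<ge> 2" using n by simp
  have \<sigma>I: "hs_inner n (entries \<sigma>) I = 1"
    unfolding I_def hs_inner_one_mat_right[OF hermitian_mat_carrier[OF \<sigma>(1)]] \<sigma>(2) by simp
  have II: "hs_inner n I I = real n"
    unfolding I_def by (simp add: hs_inner_one_mat_right mtrace_def)
  have sum_w: "(\<Sum>\<alpha><n^2. w \<alpha>) = 0"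
    using general_sic_povm_hs_inner_one_left[OF sic, of "entries \<sigma>"] \<sigma>I nr
    unfolding w_def sum_subtractf I_def by (simp add: hs_inner_commute)
  have "hs_inner n Z (entries \<sigma>) = (\<Sum>\<alpha><n^2. w \<alpha> * (w \<alpha> + 1 / real n ^ 2))"
    unfolding Z_def mat_lincomb_def by (subst hs_inner_sum_left) (simp_all add: w_def)
  also have "\<dots> = S"
    unfolding S_def sum_distrib_right[of _ _ "1 / real n ^ 2", symmetric] sum_w distrib_left sum.distrib
    by (simp add: power2_eq_square)
  finally have ZT: "hs_inner n Z T = S"
    unfolding T_def hs_inner_add_scaled_right I_def Z_def
    using general_sic_povm_lincomb_trace[OF sic n sum_w] by (simp del: entries_apply)
  have TT: "hs_inner n T T = hs_inner n (entries \<sigma>) (entries \<sigma>) - 1 / real n"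
    unfolding T_def hs_inner_add_scaled_left hs_inner_add_scaled_right \<sigma>I II
      hs_inner_commute[of n I "entries \<sigma>"] using nr by (simp add: field_simps del: entries_apply)
  have "S \<le> (a - sic_overlap n a) * hs_inner n T T"
    using general_sic_povm_lincomb_hs_inner_self[OF sic sum_w] ZT general_sic_povm_gap_pos[OF sic n]
    unfolding S_def[symmetric] Z_def[symmetric] by (rule hs_inner_projection_le)
  moreover have "(\<Sum>\<alpha><n^2. (hs_inner n (entries (P \<alpha>)) (entries \<sigma>))^2) = S + 1 / real n ^ 2"
    using sum_square_shift[OF sum_w, of "1 / real n ^ 2"] nr
    unfolding S_def w_def by (simp add: power2_eq_square)
  ultimately show ?thesis
    unfolding TT by simp
qed

lemma general_sic_povm_sum_square_le:
  assumes sic: "general_sic_povm n a P" and n: "n \<ge> 2" and \<sigma>: "density_matrix n \<sigma>"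
  shows "(\<Sum>\<alpha><n^2. (Re (mtrace (P \<alpha> * \<sigma>)))^2) \<le> (a * real n ^ 2 + 1) / (real n * (real n + 1))"
proof -
  have herm: "hermitian_mat n \<sigma>" and tr: "mtrace \<sigma> = 1"
    using \<sigma> unfolding density_matrix_def psd_mat_def by auto
  have "(\<Sum>\<alpha><n^2. (Re (mtrace (P \<alpha> * \<sigma>)))^2) = (\<Sum>\<alpha><n^2. (hs_inner n (entries (P \<alpha>)) (entries \<sigma>))^2)"
    by (intro sum.cong refl) (simp add: mtrace_hermitian_mult[OF general_sic_povm_hermitian[OF sic] herm])
  also have "\<dots> \<le> 1 / real n ^ 2 + (a - sic_overlap n a) * (hs_inner n (entries \<sigma>) (entries \<sigma>) - 1 / real n)"
    by (rule general_sic_povm_sum_square_le_purity[OF sic n herm tr])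
  also have "\<dots> \<le> 1 / real n ^ 2 + (a - sic_overlap n a) * (1 - 1 / real n)"
    using density_matrix_purity_le_one[OF \<sigma>] general_sic_povm_gap_pos[OF sic n]
    by (simp add: mult_left_mono)
  also have "\<dots> = (a * real n ^ 2 + 1) / (real n * (real n + 1))"
    unfolding sic_overlap_gap[OF n] using sic_gap_bound_eq[of "real n" a] n by simp
  finally show ?thesis .
qed

lemma general_sic_povm_bound_le_one:
  assumes "general_sic_povm n a P" "n \<ge> 2"
  shows "(a * real n ^ 2 + 1) / (real n * (real n + 1)) \<le> 1"
proof -
  have nr: "real n \<ge> 2" using assms(2) by simp
  have "a * real n ^ 2 \<le> 1" using assms(1) nr unfolding general_sic_povm_def by (simp add: field_simps)
  moreover have "real n * (real n + 1) \<ge> 2 * 3" using nr by (intro mult_mono) auto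
  ultimately show ?thesis by simp
qed

section \<open>Kronecker products\<close>

lemma sum_lessThan_mult_nat:
  fixes f :: "nat \<Rightarrow> 'a::comm_monoid_add"
  shows "(\<Sum>r<p * q. f r) = (\<Sum>i<p. \<Sum>l<q. f (i * q + l))"
proof -
  have "(\<Sum>r<p * q. f r) = (\<Sum>i<p. sum f {i * q..<i * q + q})"
    by (rule sum.nat_group[symmetric])
  also have "\<dots> = (\<Sum>i<p. \<Sum>l<q. f (i * q + l))"
  proof (rule sum.cong[OF refl])
    fix i
    have "sum f {0 + i * q..<q + i * q} = (\<Sum>l\<in>{0..<q}. f (l + i * q))"
      by (rule sum.shift_bounds_nat_ivl)
    then show "sum f {i * q..<i * q + q} = (\<Sum>l<q. f (i * q + l))"
      by (simp add: atLeast0LessThan add.commute)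
  qed
  finally show ?thesis .
qed

lemma kron_carrier:
  assumes "A \<in> carrier_mat p p" "B \<in> carrier_mat q q"
  shows "kron A B \<in> carrier_mat (p * q) (p * q)"
  using assms unfolding kron_def by auto

lemma tensor_prod_carrier:
  assumes "\<forall>i<k. A i \<in> carrier_mat (d i) (d i)"
  shows "tensor_prod k A \<in> carrier_mat (\<Prod>i<k. d i) (\<Prod>i<k. d i)"
  using assms by (induction k) (simp_all add: kron_carrier)

lemma tensor_prod_cong:
  assumes "\<forall>i<k. A i = B i"
  shows "tensor_prod k A = tensor_prod k B"
  using assms by (induction k) auto

lemma mtrace_kron_mult:
  assumes A: "A \<in> carrier_mat p p" "C \<in> carrier_mat p p"
    and B: "B \<in> carrier_mat q q" "D \<in> carrier_mat q q"
  shows "mtrace (kron A B * kron C D) = mtrace (A * C) * mtrace (B * D)"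
proof (cases "q = 0")
  case True
  then show ?thesis
    using mtrace_mult[OF kron_carrier[OF A(1) B(1)] kron_carrier[OF A(2) B(2)]] mtrace_mult[OF B] by simp
next
  case False
  have lt: "i * q + k < p * q" if "i < p" "k < q" for i k
  proof -
    have "i * q + k < Suc i * q" using that by simp
    also have "\<dots> \<le> p * q" using that by (intro mult_right_mono) auto
    finally show ?thesis .
  qed
  have "mtrace (kron A B * kron C D) = (\<Sum>r<p*q. \<Sum>c<p*q. kron A B $$ (r, c) * kron C D $$ (c, r))"
    by (rule mtrace_mult[OF kron_carrier[OF A(1) B(1)] kron_carrier[OF A(2) B(2)]])
  also have "\<dots> = (\<Sum>i<p. \<Sum>k<q. \<Sum>j<p. \<Sum>l<q. (A $$ (i, j) * C $$ (j, i)) * (B $$ (k, l) * D $$ (l, k)))"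
    unfolding sum_lessThan_mult_nat
    using A B False lt by (intro sum.cong refl) (simp add: kron_def)
  also have "\<dots> = (\<Sum>i<p. \<Sum>j<p. \<Sum>k<q. \<Sum>l<q. (A $$ (i, j) * C $$ (j, i)) * (B $$ (k, l) * D $$ (l, k)))"
    by (intro sum.cong refl sum.swap)
  also have "\<dots> = (\<Sum>i<p. \<Sum>j<p. A $$ (i, j) * C $$ (j, i) * (\<Sum>k<q. \<Sum>l<q. B $$ (k, l) * D $$ (l, k)))"
    by (simp add: sum_distrib_left)
  also have "\<dots> = (\<Sum>i<p. \<Sum>j<p. A $$ (i, j) * C $$ (j, i)) * (\<Sum>k<q. \<Sum>l<q. B $$ (k, l) * D $$ (l, k))"
    by (simp add: sum_distrib_right)
  also have "\<dots> = mtrace (A * C) * mtrace (B * D)"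
    using mtrace_mult[OF A] mtrace_mult[OF B] by simp
  finally show ?thesis .
qed

lemma mtrace_tensor_prod_mult:
  assumes "\<forall>i<k. A i \<in> carrier_mat (d i) (d i) \<and> B i \<in> carrier_mat (d i) (d i)"
  shows "mtrace (tensor_prod k A * tensor_prod k B) = (\<Prod>i<k. mtrace (A i * B i))"
  using assms
proof (induction k)
  case 0
  then show ?case by (simp add: mtrace_def)
next
  case (Suc k)
  have "tensor_prod k A \<in> carrier_mat (\<Prod>i<k. d i) (\<Prod>i<k. d i)"
    and "tensor_prod k B \<in> carrier_mat (\<Prod>i<k. d i) (\<Prod>i<k. d i)"
    and "A k \<in> carrier_mat (d k) (d k)" and "B k \<in> carrier_mat (d k) (d k)"
    using Suc.prems by (auto intro!: tensor_prod_carrier)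
  from mtrace_kron_mult[OF this(1,2,3,4)] show ?case
    using Suc by simp
qed

section \<open>Products of numbers in [-1, 1]\<close>

lemma prod_abs_le_two_factors:
  fixes z :: "nat \<Rightarrow> real"
  assumes "i < m" "l < m" "i \<noteq> l" "\<forall>k<m. \<bar>z k\<bar> \<le> 1"
  shows "(\<Prod>k<m. \<bar>z k\<bar>) \<le> \<bar>z i\<bar> * \<bar>z l\<bar>"
proof -
  have "(\<Prod>k<m. \<bar>z k\<bar>) = \<bar>z i\<bar> * (\<Prod>k\<in>{..<m}-{i}. \<bar>z k\<bar>)"
    by (rule prod.remove) (use assms in auto)
  also have "(\<Prod>k\<in>{..<m}-{i}. \<bar>z k\<bar>) = \<bar>z l\<bar> * (\<Prod>k\<in>{..<m}-{i}-{l}. \<bar>z k\<bar>)"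
    by (rule prod.remove) (use assms in auto)
  finally have "(\<Prod>k<m. \<bar>z k\<bar>) = \<bar>z i\<bar> * (\<bar>z l\<bar> * (\<Prod>k\<in>{..<m}-{i}-{l}. \<bar>z k\<bar>))" .
  moreover have "(\<Prod>k\<in>{..<m}-{i}-{l}. \<bar>z k\<bar>) \<le> 1"
    by (rule prod_le_1) (use assms in auto)
  ultimately show ?thesis
    by (simp add: mult_left_le mult_left_mono)
qed

lemma bij_betw_Suc_mod:
  assumes "m > 0"
  shows "bij_betw (\<lambda>i. Suc i mod m) {..<m} {..<m}"
proof -
  have inj: "inj_on (\<lambda>i. Suc i mod m) {..<m}"
    by (auto simp: inj_on_def mod_Suc split: if_splits)
  moreover have "(\<lambda>i. Suc i mod m) ` {..<m} \<subseteq> {..<m}"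
    using assms by auto
  ultimately show ?thesis
    unfolding bij_betw_def using endo_inj_surj[of "{..<m}"] by simp
qed

lemma prod_le_mean_square:
  fixes z :: "nat \<Rightarrow> real"
  assumes m: "m \<ge> 2" and z: "\<forall>k<m. \<bar>z k\<bar> \<le> 1"
  shows "(\<Prod>k<m. z k) \<le> (1 / real m) * (\<Sum>k<m. (z k)^2)"
proof -
  define s where "s i = Suc i mod m" for i
  have pair: "(\<Prod>k<m. \<bar>z k\<bar>) \<le> ((z i)^2 + (z (s i))^2) / 2" if "i < m" for i
  proof -
    have "s i < m" "i \<noteq> s i" using m that unfolding s_def by (auto simp: mod_Suc)
    then have "(\<Prod>k<m. \<bar>z k\<bar>) \<le> \<bar>z i\<bar> * \<bar>z (s i)\<bar>"
      using prod_abs_le_two_factors[OF that _ _ z] by blast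
    also have "\<dots> \<le> ((z i)^2 + (z (s i))^2) / 2"
      using sum_squares_bound[of "\<bar>z i\<bar>" "\<bar>z (s i)\<bar>"] by simp
    finally show ?thesis .
  qed
  have "real m * (\<Prod>k<m. \<bar>z k\<bar>) \<le> (\<Sum>i<m. ((z i)^2 + (z (s i))^2) / 2)"
    using sum_mono[of "{..<m}" "\<lambda>_. \<Prod>k<m. \<bar>z k\<bar>"] pair by simp
  also have "\<dots> = ((\<Sum>i<m. (z i)^2) + (\<Sum>i<m. (z (s i))^2)) / 2"
    by (simp only: sum_divide_distrib[symmetric] sum.distrib)
  also have "(\<Sum>i<m. (z (s i))^2) = (\<Sum>i<m. (z i)^2)"
    unfolding s_def by (rule sum.reindex_bij_betw[OF bij_betw_Suc_mod]) (use m in auto)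
  finally have "(\<Prod>k<m. \<bar>z k\<bar>) \<le> (1 / real m) * (\<Sum>k<m. (z k)^2)"
    using m by (simp add: field_simps)
  moreover have "(\<Prod>k<m. z k) \<le> (\<Prod>k<m. \<bar>z k\<bar>)"
    using abs_prod[of z "{..<m}"] abs_ge_self[of "\<Prod>k<m. z k"] by simp
  ultimately show ?thesis by linarith
qed

lemma sum_prod_le_mean_bound:
  fixes y :: "nat \<Rightarrow> nat \<Rightarrow> real" and B :: "nat \<Rightarrow> real" and \<tau> :: "nat \<Rightarrow> nat \<Rightarrow> nat"
  assumes m: "m \<ge> 2"
    and sq: "\<forall>i<m. (\<Sum>\<alpha><N i. (y i \<alpha>)^2) \<le> B i" and B: "\<forall>i<m. B i \<le> 1"
    and \<tau>: "\<forall>i<m. inj_on (\<tau> i) {..<dd} \<and> \<tau> i ` {..<dd} \<subseteq> {..<N i}"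
  shows "(\<Sum>j<dd. \<Prod>i<m. y i (\<tau> i j)) \<le> (1 / real m) * (\<Sum>i<m. B i)"
proof -
  have sq_sub: "(\<Sum>j<dd. (y i (\<tau> i j))^2) \<le> B i" if "i < m" for i
  proof -
    have "(\<Sum>j<dd. (y i (\<tau> i j))^2) = (\<Sum>\<alpha>\<in>\<tau> i ` {..<dd}. (y i \<alpha>)^2)"
      using \<tau> that by (simp add: sum.reindex)
    also have "\<dots> \<le> (\<Sum>\<alpha><N i. (y i \<alpha>)^2)"
      using \<tau> that by (intro sum_mono2) auto
    finally show ?thesis using sq that by fastforce
  qed
  have abs_le: "\<bar>y i (\<tau> i j)\<bar> \<le> 1" if "i < m" "j < dd" for i j
  proof -
    have "(y i (\<tau> i j))^2 \<le> (\<Sum>j<dd. (y i (\<tau> i j))^2)"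
      by (rule member_le_sum[where f = "\<lambda>j. (y i (\<tau> i j))^2"]) (use that in auto)
    also have "\<dots> \<le> 1" using sq_sub B that by fastforce
    finally show ?thesis by (simp add: abs_square_le_1)
  qed
  have "(\<Sum>j<dd. \<Prod>i<m. y i (\<tau> i j)) \<le> (\<Sum>j<dd. (1 / real m) * (\<Sum>i<m. (y i (\<tau> i j))^2))"
    using abs_le by (intro sum_mono prod_le_mean_square[OF m]) auto
  also have "\<dots> = (1 / real m) * (\<Sum>i<m. \<Sum>j<dd. (y i (\<tau> i j))^2)"
    by (simp add: sum_distrib_left sum.swap[of _ "{..<dd}"])
  also have "\<dots> \<le> (1 / real m) * (\<Sum>i<m. B i)"
    using sq_sub by (intro mult_left_mono sum_mono) auto
  finally show ?thesis .
qed

section \<open>Separable states\<close>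

lemma mtrace_mult_convex_combination:
  assumes Q: "Q \<in> carrier_mat D D" and T: "\<forall>k<K. T k \<in> carrier_mat D D"
  shows "mtrace (Q * mat D D (\<lambda>(r, c). \<Sum>k<K. complex_of_real (p k) * T k $$ (r, c)))
       = (\<Sum>k<K. complex_of_real (p k) * mtrace (Q * T k))"
proof -
  have "mtrace (Q * mat D D (\<lambda>(r, c). \<Sum>k<K. complex_of_real (p k) * T k $$ (r, c)))
      = (\<Sum>r<D. \<Sum>c<D. \<Sum>k<K. complex_of_real (p k) * (Q $$ (r, c) * T k $$ (c, r)))"
    by (subst mtrace_mult[OF Q]) (auto simp: sum_distrib_left mult.left_commute intro!: sum.cong)
  also have "\<dots> = (\<Sum>k<K. \<Sum>r<D. \<Sum>c<D. complex_of_real (p k) * (Q $$ (r, c) * T k $$ (c, r)))"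
    by (simp add: sum.swap[of _ "{..<K}"])
  also have "\<dots> = (\<Sum>k<K. complex_of_real (p k) * mtrace (Q * T k))"
    using T Q by (intro sum.cong refl) (simp add: mtrace_mult sum_distrib_left)
  finally show ?thesis .
qed

lemma fully_separable_product_expectation:
  assumes "fully_separable m d \<rho>"
  obtains K :: nat and p \<sigma> where "\<forall>k<K. 0 \<le> p k" "(\<Sum>k<K. p k) = 1"
    "\<forall>k<K. \<forall>i<m. density_matrix (d i) (\<sigma> k i)"
    "\<And>Q. \<forall>i<m. hermitian_mat (d i) (Q i) \<Longrightarrow>
       Re (mtrace (tensor_prod m Q * \<rho>)) = (\<Sum>k<K. p k * (\<Prod>i<m. Re (mtrace (Q i * \<sigma> k i))))"
proof -
  define D where "D = (\<Prod>i<m. d i)"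
  obtain K :: nat and p \<sigma> where p: "\<forall>k<K. 0 \<le> p k" "(\<Sum>k<K. p k) = 1"
    and \<sigma>: "\<forall>k<K. \<forall>i<m. density_matrix (d i) (\<sigma> k i)"
    and \<rho>: "\<rho> = mat D D (\<lambda>(r, c). \<Sum>k<K. complex_of_real (p k) * tensor_prod m (\<sigma> k) $$ (r, c))"
    using assms unfolding fully_separable_def Let_def D_def[symmetric] by blast
  have h\<sigma>: "hermitian_mat (d i) (\<sigma> k i)" if "k < K" "i < m" for k i
    using \<sigma> that unfolding density_matrix_def psd_mat_def by blast
  have "Re (mtrace (tensor_prod m Q * \<rho>)) = (\<Sum>k<K. p k * (\<Prod>i<m. Re (mtrace (Q i * \<sigma> k i))))"
    if Q: "\<forall>i<m. hermitian_mat (d i) (Q i)" for Q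
  proof -
    have real: "mtrace (Q i * \<sigma> k i) = complex_of_real (Re (mtrace (Q i * \<sigma> k i)))"
      if "k < K" "i < m" for k i
      using mtrace_hermitian_mult[of "d i" "Q i" "\<sigma> k i"] Q h\<sigma> that by simp
    have cQ: "tensor_prod m Q \<in> carrier_mat D D"
      unfolding D_def using Q by (intro tensor_prod_carrier) (simp add: hermitian_mat_carrier)
    have c\<sigma>: "\<forall>k<K. tensor_prod m (\<sigma> k) \<in> carrier_mat D D"
      unfolding D_def using h\<sigma> by (simp add: tensor_prod_carrier hermitian_mat_carrier)
    have "mtrace (tensor_prod m Q * \<rho>)
        = (\<Sum>k<K. complex_of_real (p k) * mtrace (tensor_prod m Q * tensor_prod m (\<sigma> k)))"
      unfolding \<rho> by (rule mtrace_mult_convex_combination[OF cQ c\<sigma>])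
    also have "\<dots> = (\<Sum>k<K. complex_of_real (p k) * (\<Prod>i<m. complex_of_real (Re (mtrace (Q i * \<sigma> k i)))))"
    proof (intro sum.cong refl arg_cong2[where f = "(*)"])
      fix k assume k: "k \<in> {..<K}"
      have "mtrace (tensor_prod m Q * tensor_prod m (\<sigma> k)) = (\<Prod>i<m. mtrace (Q i * \<sigma> k i))"
        using Q h\<sigma> k by (intro mtrace_tensor_prod_mult[where d = d]) (simp add: hermitian_mat_carrier)
      also have "\<dots> = (\<Prod>i<m. complex_of_real (Re (mtrace (Q i * \<sigma> k i))))"
        using real k by (intro prod.cong) auto
      finally show "mtrace (tensor_prod m Q * tensor_prod m (\<sigma> k))
          = (\<Prod>i<m. complex_of_real (Re (mtrace (Q i * \<sigma> k i))))" .
    qed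
    also have "\<dots> = complex_of_real (\<Sum>k<K. p k * (\<Prod>i<m. Re (mtrace (Q i * \<sigma> k i))))"
      by simp
    finally show ?thesis
      by (metis Re_complex_of_real)
  qed
  with p \<sigma> that show ?thesis by blast
qed

lemma sic_povm_product_state_sum_le:
  fixes \<tau> :: "nat \<Rightarrow> nat \<Rightarrow> nat"
  assumes m: "m \<ge> 2" and d: "\<forall>i<m. d i \<ge> 2" and sic: "\<forall>i<m. general_sic_povm (d i) (a i) (P i)"
    and \<sigma>: "\<forall>i<m. density_matrix (d i) (\<sigma> i)"
    and \<tau>: "\<forall>i<m. inj_on (\<tau> i) {..<dd} \<and> \<tau> i ` {..<dd} \<subseteq> {..<d i ^ 2}"
  shows "(\<Sum>j<dd. \<Prod>i<m. Re (mtrace (P i (\<tau> i j) * \<sigma> i)))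
       \<le> (1 / real m) * (\<Sum>i<m. (a i * real (d i) ^ 2 + 1) / (real (d i) * (real (d i) + 1)))"
proof (rule sum_prod_le_mean_bound[OF m _ _ \<tau>])
  show "\<forall>i<m. (\<Sum>\<alpha><d i ^ 2. (Re (mtrace (P i \<alpha> * \<sigma> i)))^2)
      \<le> (a i * real (d i) ^ 2 + 1) / (real (d i) * (real (d i) + 1))"
    using d sic \<sigma> by (simp add: general_sic_povm_sum_square_le)
  show "\<forall>i<m. (a i * real (d i) ^ 2 + 1) / (real (d i) * (real (d i) + 1)) \<le> 1"
    using d sic general_sic_povm_bound_le_one by blast
qed

lemma fully_separable_sic_povm_sum_le:
  fixes \<tau> :: "nat \<Rightarrow> nat \<Rightarrow> nat"
  assumes m: "m \<ge> 2" and d: "\<forall>i<m. d i \<ge> 2" and sic: "\<forall>i<m. general_sic_povm (d i) (a i) (P i)"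
    and sep: "fully_separable m d \<rho>"
    and \<tau>: "\<forall>i<m. inj_on (\<tau> i) {..<dd} \<and> \<tau> i ` {..<dd} \<subseteq> {..<d i ^ 2}"
  shows "Re (\<Sum>j<dd. mtrace (tensor_prod m (\<lambda>i. P i (\<tau> i j)) * \<rho>))
       \<le> (1 / real m) * (\<Sum>i<m. (a i * real (d i) ^ 2 + 1) / (real (d i) * (real (d i) + 1)))"
    (is "_ \<le> ?C")
proof -
  obtain K :: nat and p \<sigma> where p: "\<forall>k<K. 0 \<le> p k" "(\<Sum>k<K. p k) = 1"
    and \<sigma>: "\<forall>k<K. \<forall>i<m. density_matrix (d i) (\<sigma> k i)"
    and expectation: "\<And>Q. \<forall>i<m. hermitian_mat (d i) (Q i) \<Longrightarrow>
       Re (mtrace (tensor_prod m Q * \<rho>)) = (\<Sum>k<K. p k * (\<Prod>i<m. Re (mtrace (Q i * \<sigma> k i))))"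
    using fully_separable_product_expectation[OF sep] by blast
  have "Re (mtrace (tensor_prod m (\<lambda>i. P i (\<tau> i j)) * \<rho>))
      = (\<Sum>k<K. p k * (\<Prod>i<m. Re (mtrace (P i (\<tau> i j) * \<sigma> k i))))" if "j < dd" for j
    using that \<tau> sic by (intro expectation) (blast intro: general_sic_povm_hermitian)
  then have "Re (\<Sum>j<dd. mtrace (tensor_prod m (\<lambda>i. P i (\<tau> i j)) * \<rho>))
      = (\<Sum>j<dd. \<Sum>k<K. p k * (\<Prod>i<m. Re (mtrace (P i (\<tau> i j) * \<sigma> k i))))"
    unfolding Re_sum by (intro sum.cong refl) auto
  also have "\<dots> = (\<Sum>k<K. p k * (\<Sum>j<dd. \<Prod>i<m. Re (mtrace (P i (\<tau> i j) * \<sigma> k i))))"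
    by (subst sum.swap) (simp add: sum_distrib_left)
  also have "\<dots> \<le> (\<Sum>k<K. p k * ?C)"
    using p(1) \<sigma> by (intro sum_mono mult_left_mono sic_povm_product_state_sum_le[OF m d sic _ \<tau>]) auto
  also have "\<dots> = ?C"
    unfolding sum_distrib_right[symmetric] p(2) by simp
  finally show ?thesis .
qed

(* J_value is a maximum over an infinite set of tuples, but the value only depends on the
   finitely many restrictions to {..<dd}. *)
lemma J_value_le:
  fixes m :: nat and d :: "nat \<Rightarrow> nat" and C :: real
  defines "dd \<equiv> Min ((\<lambda>i. d i ^ 2) ` {..<m})"
  assumes "\<And>\<tau>. \<forall>i<m. inj_on (\<tau> i) {..<dd} \<and> \<tau> i ` {..<dd} \<subseteq> {..<d i ^ 2} \<Longrightarrow>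
             Re (\<Sum>j<dd. mtrace (tensor_prod m (\<lambda>i. P i (\<tau> i j)) * \<rho>)) \<le> C"
  shows "J_value m d P \<rho> \<le> C"
proof -
  define V where "V \<tau> = Re (\<Sum>j<dd. mtrace (tensor_prod m (\<lambda>i. P i (\<tau> i j)) * \<rho>))" for \<tau>
  define admissible where
    "admissible \<tau> \<longleftrightarrow> (\<forall>i<m. inj_on (\<tau> i) {..<dd} \<and> \<tau> i ` {..<dd} \<subseteq> {..<d i ^ 2})" for \<tau>
  define R where "R \<tau> = restrict (\<lambda>i. restrict (\<tau> i) {..<dd}) {..<m}" for \<tau> :: "nat \<Rightarrow> nat \<Rightarrow> nat"
  have V_R: "V (R \<tau>) = V \<tau>" for \<tau>
  proof -
    have "tensor_prod m (\<lambda>i. P i (R \<tau> i j)) = tensor_prod m (\<lambda>i. P i (\<tau> i j))" if "j < dd" for j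
      using that by (intro tensor_prod_cong) (simp add: R_def)
    then show ?thesis
      unfolding V_def by (intro arg_cong[where f = Re] sum.cong refl) auto
  qed
  have "{V \<tau> | \<tau>. admissible \<tau>} \<subseteq> V ` (PiE {..<m} (\<lambda>i. PiE {..<dd} (\<lambda>_. {..<d i ^ 2})))"
  proof
    fix v assume "v \<in> {V \<tau> | \<tau>. admissible \<tau>}"
    then obtain \<tau> where v: "v = V \<tau>" and "admissible \<tau>" by blast
    then have "R \<tau> \<in> PiE {..<m} (\<lambda>i. PiE {..<dd} (\<lambda>_. {..<d i ^ 2}))"
      unfolding R_def admissible_def restrict_PiE_iff by auto
    then show "v \<in> V ` (PiE {..<m} (\<lambda>i. PiE {..<dd} (\<lambda>_. {..<d i ^ 2})))"
      using v V_R by (metis image_eqI)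
  qed
  then have "finite {V \<tau> | \<tau>. admissible \<tau>}"
    by (rule finite_subset) (intro finite_imageI finite_PiE; simp)
  moreover have "admissible (\<lambda>i j. j)"
    unfolding admissible_def dd_def by (auto intro: less_le_trans Min_le)
  then have "{V \<tau> | \<tau>. admissible \<tau>} \<noteq> {}" by blast
  moreover have "J_value m d P \<rho> = Max {V \<tau> | \<tau>. admissible \<tau>}"
    unfolding J_value_def Let_def V_def admissible_def dd_def by simp
  ultimately show ?thesis
    using assms(2) unfolding V_def admissible_def by (auto intro!: Max.boundedI)
qed

theorem theorem3:
  fixes m :: nat and d :: "nat \<Rightarrow> nat" and a :: "nat \<Rightarrow> real"
    and P :: "nat \<Rightarrow> nat \<Rightarrow> complex mat" and \<rho> :: "complex mat"
  assumes "m \<ge> 2"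
    and "\<forall>i<m. d i \<ge> 2"
    and "density_matrix (\<Prod>i<m. d i) \<rho>"
    and "\<forall>i<m. general_sic_povm (d i) (a i) (P i)"
    and "fully_separable m d \<rho>"
  shows "J_value m d P \<rho> \<le>
           (1 / real m) * (\<Sum>i<m. (a i * real (d i) ^ 2 + 1) / (real (d i) * (real (d i) + 1)))"
  using fully_separable_sic_povm_sum_le[OF assms(1,2,4,5)] by (rule J_value_le)

end
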